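(* Let $D$ be a flagging monitor over an event alphabet $\Sigma$. For every infinite trace $\sigma \in \Sigma^\omega$, all indices $i \le j$ and every natural number $n > 0$: if $\sigma_{i,j} \Vdash D$ then $\sigma_{i,j+n} \not\Vdash D$.
   Context: Traces: for an infinite trace $\sigma=\sigma_0\sigma_1\cdots$ over $\Sigma$ and $i\le j$, $\sigma_{i,j}=\sigma_i\cdots\sigma_j$ is the finite sub-trace from position $i$ to position $j$ inclusive. A flagging monitor is a tuple $D=\langle \Sigma, \mathbb{V}, \Theta, Q, \theta_0, q_0, F, \perp, \rightarrow\rangle$ where $\Sigma$ is the event alphabet, $\mathbb{V}$ is a set of typed variables (with arbitrary, possibly infinite, domains), $\Theta$ is the set of valuations of $\mathbb{V}$, $Q$ is a finite set of states, $\theta_0\in\Theta$ is the initial valuation, $q_0\in Q$ the initial state, $F\subseteq Q\setminus\{q_0\}$ the set of flagging states, $\perp\in Q$ a sink state, and $\rightarrow$ is a deterministic set of transitions $q \xrightarrow{g\mapsto a} q'$ with $q\in Q\setminus\{\perp\}$, guard $g:\Sigma\times\Theta\to\{\mathit{true},\mathit{false}\}$ and action $a:\Sigma\times\Theta\to\Theta$ (determinism: for each $q$, $E$, $\theta$, at most one transition leaving $q$ has a guard true on $(E,\theta)$). Semantics: configurations are pairs $(q,\theta)\in Q\times\Theta$; on reading an event $E\in\Sigma$: (1) if $q\notin F\cup\{\perp\}$ and there is a transition $q\xrightarrow{g\mapsto a}q'$ with $g(E,\theta)$ true, move to $(q',a(E,\theta))$; (2) if $q\notin F\cup\{\perp\}$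 and no transition from $q$ has a guard true on $(E,\theta)$, stay in $(q,\theta)$; (3) $(\perp,\theta)$ moves to $(\perp,\theta)$; (4) if $q\in F$, $(q,\theta)$ moves to $(\perp,\theta)$. A finite trace $\sigma_{i,j}$ is flagging, written $\sigma_{i,j}\Vdash D$, if running the monitor from $(q_0,\theta_0)$ on $\sigma_i,\dots,\sigma_j$ ends in a configuration $(q_F,\theta')$ with $q_F\in F$. *)

theory Defs
  imports Main
begin

text \<open>The event alphabet Sigma is the type 'e, the set Theta of
valuations of the typed variables is the type 'v, states are of type 'q with the finite
state set Q given explicitly.\<close>

record ('e, 'v, 'q) flagging_monitor =
  states :: "'q set"
  theta0 :: 'v
  q0 :: 'q
  flag :: "'q set"
  sink :: 'q
  trans :: "('q \<times> ('e \<Rightarrow> 'v \<Rightarrow> bool) \<times> ('e \<Rightarrow> 'v \<Rightarrow> 'v) \<times> 'q) set"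

definition wf_monitor :: "('e, 'v, 'q) flagging_monitor \<Rightarrow> bool" where
  "wf_monitor D \<longleftrightarrow>
     finite (states D) \<and>
     q0 D \<in> states D \<and>
     flag D \<subseteq> states D - {q0 D} \<and>
     sink D \<in> states D \<and>
     sink D \<notin> flag D \<and>
     (\<forall>(q, g, a, q') \<in> trans D. q \<in> states D - {sink D} \<and> q' \<in> states D) \<and>
     (\<forall>q E \<theta> t1 t2. t1 \<in> trans D \<longrightarrow> t2 \<in> trans D \<longrightarrow>
        fst t1 = q \<longrightarrow> fst t2 = q \<longrightarrow>
        fst (snd t1) E \<theta> \<longrightarrow> fst (snd t2) E \<theta> \<longrightarrow> t1 = t2)"

definition step :: "('e, 'v, 'q) flagging_monitor \<Rightarrow> 'q \<times> 'v \<Rightarrow> 'e \<Rightarrow> 'q \<times> 'v" where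
  "step D c E = (let (q, \<theta>) = c in
     if q = sink D then (sink D, \<theta>)
     else if q \<in> flag D then (sink D, \<theta>)
     else if (\<exists>g a q'. (q, g, a, q') \<in> trans D \<and> g E \<theta>)
       then (let (g, a, q') = (THE t. (q, t) \<in> trans D \<and> fst t E \<theta>) in (q', a E \<theta>))
     else (q, \<theta>))"

definition run :: "('e, 'v, 'q) flagging_monitor \<Rightarrow> 'e list \<Rightarrow> 'q \<times> 'v" where
  "run D es = foldl (step D) (q0 D, theta0 D) es"

definition flagging :: "(nat \<Rightarrow> 'e) \<Rightarrow> nat \<Rightarrow> nat \<Rightarrow> ('e, 'v, 'q) flagging_monitor \<Rightarrow> bool" where
  "flagging \<sigma> i j D \<longleftrightarrow> fst (run D (map \<sigma> [i..<Suc j])) \<in> flag D"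

end

theory Submission
  imports Defs
begin

text \<open>Once the monitor reaches a flagging state, the very next event sends it to the sink,
which it never leaves. Since the sink is not flagging, no proper extension of a flagging
trace can be flagging.\<close>

lemma step_from_sink: "fst c = sink D \<Longrightarrow> fst (step D c E) = sink D"
  by (cases c) (simp add: step_def)

lemma step_from_flag: "fst c \<in> flag D \<Longrightarrow> fst (step D c E) = sink D"
  by (cases c) (simp add: step_def)

lemma foldl_step_from_sink: "fst c = sink D \<Longrightarrow> fst (foldl (step D) c es) = sink D"
  by (induction es arbitrary: c) (simp_all add: step_from_sink)

lemma run_append: "run D (xs @ ys) = foldl (step D) (run D xs) ys"
  by (simp add: run_def)

lemma run_append_from_flag:
  assumes "fst (run D xs) \<in> flag D" and "ys \<noteq> []"
  shows "fst (run D (xs @ ys)) = sink D"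
proof -
  obtain E es where "ys = E # es" using \<open>ys \<noteq> []\<close> by (cases ys) auto
  moreover have "fst (step D (run D xs) E) = sink D"
    using assms(1) by (rule step_from_flag)
  ultimately show ?thesis
    by (simp add: run_append foldl_step_from_sink)
qed

theorem proposition1:
  fixes D :: "('e, 'v, 'q) flagging_monitor" and \<sigma> :: "nat \<Rightarrow> 'e"
    and i j n :: nat
  assumes "wf_monitor D"
    and "i \<le> j"
    and "n > 0"
    and "flagging \<sigma> i j D"
  shows "\<not> flagging \<sigma> i (j + n) D"
proof -
  have upt_split: "[i..<Suc (j + n)] = [i..<Suc j] @ [Suc j..<Suc (j + n)]"
    using \<open>i \<le> j\<close> upt_add_eq_append[of i "Suc j" n] by simp
  have "[Suc j..<Suc (j + n)] \<noteq> []"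
    using \<open>n > 0\<close> by simp
  then have "fst (run D (map \<sigma> [i..<Suc (j + n)])) = sink D"
    using \<open>flagging \<sigma> i j D\<close> unfolding upt_split map_append flagging_def
    by (simp add: run_append_from_flag)
  moreover have "sink D \<notin> flag D"
    using \<open>wf_monitor D\<close> by (simp add: wf_monitor_def)
  ultimately show ?thesis
    by (simp add: flagging_def)
qed

end
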